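(* Let $k\ge 1$ be an integer. Let $\boldsymbol{L}$ be the $(k+1)\times(k+1)$ lower triangular matrix with all entries on and below the diagonal equal to $1$ (and zeros above), let \[\boldsymbol{u}=\Big[\tfrac{1}{2^{k+1}},\tfrac{1}{2^{k+1}},\tfrac{1}{2^{k}},\tfrac{1}{2^{k-1}},\ldots,\tfrac{1}{2^2}\Big]\in\mathbb{R}^{k+1},\qquad \boldsymbol{v}=\Big[\tfrac{1}{2^{k}},\tfrac{1}{2^{k}-1},\tfrac{1}{2^{k-1}-1},\ldots,\tfrac{1}{2^2-1},\tfrac{1}{2-1}\Big]\in\mathbb{R}^{k+1},\] and $\boldsymbol{U}=\mathrm{Diag}(\boldsymbol{u})$, $\boldsymbol{V}=\mathrm{Diag}(\boldsymbol{v})$. Then for every $\boldsymbol{x}\in\mathbb{R}^{k+1}_{>0}$, \[ \mathcal{R}(\mathtt{KB})\;\ge\; R(\boldsymbol{x}):=\frac{\boldsymbol{x}^T\boldsymbol{L}^T\boldsymbol{V}\boldsymbol{L}^T\boldsymbol{U}\boldsymbol{L}\boldsymbol{V}\boldsymbol{L}\boldsymbol{x}}{\boldsymbol{x}^T\boldsymbol{L}^T\boldsymbol{U}\boldsymbol{L}\boldsymbol{x}}. \]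
   Context: Min-Weighted Sum Bin Packing (MWSBP): an instance consists of $n$ items with sizes $s_i\in(0,1]$ and weights $w_i>0$. A feasible solution is a partition of the items into bins $B_1,\ldots,B_p$ with $\sum_{i\in B_k}s_i\le 1$; its cost is $\sum_{k=1}^p k\sum_{i\in B_k}w_i$; $\mathtt{OPT}$ is the minimum cost. The Knapsack-Batching algorithm ($\mathtt{KB}$): for $k=1,2,\ldots$ while items remain, let $B_k$ be a subset of the remaining items of maximum total weight subject to total size at most $1$ (ties broken arbitrarily). The approximation ratio $\mathcal{R}(\mathtt{ALG})$ is the smallest $\rho\ge1$ such that on every instance (and for every way the algorithm may break ties) the cost of its output is at most $\rho\cdot\mathtt{OPT}$. *)

theory Defs
  imports "Jordan_Normal_Form.Matrix" "HOL-Library.Extended_Real"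
begin

definition valid_instance :: "nat \<Rightarrow> (nat \<Rightarrow> real) \<Rightarrow> (nat \<Rightarrow> real) \<Rightarrow> bool" where
  "valid_instance n s w \<longleftrightarrow> (\<forall>i<n. 0 < s i \<and> s i \<le> 1 \<and> 0 < w i)"

text \<open>A solution is given by a bin assignment b: item i goes to bin B_(b i), bins numbered from 1.\<close>
definition bin :: "nat \<Rightarrow> (nat \<Rightarrow> nat) \<Rightarrow> nat \<Rightarrow> nat set" where
  "bin n b k = {i. i < n \<and> b i = k}"

definition feasible :: "nat \<Rightarrow> (nat \<Rightarrow> real) \<Rightarrow> (nat \<Rightarrow> nat) \<Rightarrow> bool" where
  "feasible n s b \<longleftrightarrow> (\<forall>i<n. 1 \<le> b i) \<and> (\<forall>k. (\<Sum>i\<in>bin n b k. s i) \<le> 1)"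

definition cost :: "nat \<Rightarrow> (nat \<Rightarrow> real) \<Rightarrow> (nat \<Rightarrow> nat) \<Rightarrow> real" where
  "cost n w b = (\<Sum>k\<in>b ` {..<n}. real k * (\<Sum>i\<in>bin n b k. w i))"

definition OPT :: "nat \<Rightarrow> (nat \<Rightarrow> real) \<Rightarrow> (nat \<Rightarrow> real) \<Rightarrow> real" where
  "OPT n s w = Inf {cost n w b | b. feasible n s b}"

text \<open>Possible outputs of Knapsack-Batching (over all tie-breakings): for every k \<ge> 1,
  bin B_k is a maximum-weight subset of size at most 1 of the items remaining before step k.\<close>
definition KB_output :: "nat \<Rightarrow> (nat \<Rightarrow> real) \<Rightarrow> (nat \<Rightarrow> real) \<Rightarrow> (nat \<Rightarrow> nat) \<Rightarrow> bool" where
  "KB_output n s w b \<longleftrightarrow> (\<forall>i<n. 1 \<le> b i) \<and>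
     (\<forall>k\<ge>1. (\<Sum>i\<in>bin n b k. s i) \<le> 1 \<and>
        (\<forall>S. S \<subseteq> {i. i < n \<and> k \<le> b i} \<longrightarrow> (\<Sum>i\<in>S. s i) \<le> 1 \<longrightarrow>
              (\<Sum>i\<in>S. w i) \<le> (\<Sum>i\<in>bin n b k. w i)))"

text \<open>Approximation ratio of KB (infinity if no finite rho works).\<close>
definition KB_ratio :: ereal where
  "KB_ratio = Inf {ereal \<rho> | \<rho>. 1 \<le> \<rho> \<and>
     (\<forall>n s w b. valid_instance n s w \<longrightarrow> KB_output n s w b \<longrightarrow> cost n w b \<le> \<rho> * OPT n s w)}"

definition Diag :: "real vec \<Rightarrow> real mat" where
  "Diag d = mat (dim_vec d) (dim_vec d) (\<lambda>(i,j). if i = j then d $ i else 0)"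

definition L_mat :: "nat \<Rightarrow> real mat" where
  "L_mat k = mat (k+1) (k+1) (\<lambda>(i,j). if j \<le> i then 1 else 0)"

text \<open>u = [1/2^(k+1), 1/2^(k+1), 1/2^k, ..., 1/2^2] (0-based entries)\<close>
definition u_vec :: "nat \<Rightarrow> real vec" where
  "u_vec k = vec (k+1) (\<lambda>j. if j = 0 then 1 / 2^(k+1) else 1 / 2^(k+2-j))"

text \<open>v = [1/2^k, 1/(2^k-1), 1/(2^(k-1)-1), ..., 1/(2-1)] (0-based entries)\<close>
definition v_vec :: "nat \<Rightarrow> real vec" where
  "v_vec k = vec (k+1) (\<lambda>j. if j = 0 then 1 / 2^k else 1 / (2^(k+1-j) - 1))"

definition R_val :: "nat \<Rightarrow> real vec \<Rightarrow> real" where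
  "R_val k x = (let L = L_mat k; U = Diag (u_vec k); V = Diag (v_vec k) in
     (x \<bullet> ((L\<^sup>T * V * L\<^sup>T * U * L * V * L) *\<^sub>v x)) / (x \<bullet> ((L\<^sup>T * U * L) *\<^sub>v x)))"

end

theory Submission
  imports Defs
begin

text \<open>Fix block counts \<open>B\<^sub>0, \<dots>, B\<^sub>k\<close>. The instance has \<open>c\<^sub>j B\<^sub>j\<close> items of type \<open>j\<close>, where
  \<open>c\<^sub>0 = 2^k\<close> and \<open>c\<^sub>j = 2^(k+1-j) - 1\<close>, of weight \<open>1/2^k\<close> resp. \<open>1/2^(k+1-j)\<close> and of size
  equal to the weight up to a tiny perturbation. The perturbation is chosen so that one item of
  each type fills a bin exactly, whereas items of types \<open>\<ge> j\<close> that fit into one bin weigh at most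
  as much as \<open>c\<^sub>j\<close> items of type \<open>j\<close>. Hence Knapsack-Batching may pack the types one after
  another, \<open>c\<^sub>j\<close> items per bin, while putting the \<open>r\<close>-th item of every type into bin \<open>r\<close> is
  feasible. For \<open>B\<^sub>j \<approx> t X\<^sub>j / c\<^sub>j\<close>, with \<open>X\<^sub>j\<close> the partial sums of \<open>x\<close>, the ratio of the two
  costs tends to \<open>R(x)\<close> as \<open>t \<rightarrow> \<infinity>\<close>; summation by parts identifies the limit with the
  matrix expression.\<close>

lemma cost_eq_sum_items: "cost n w b = (\<Sum>i<n. real (b i) * w i)"
proof -
  have "(\<Sum>i<n. real (b i) * w i) = (\<Sum>q\<in>b ` {..<n}. \<Sum>i\<in>{x\<in>{..<n}. b x = q}. real (b i) * w i)"
    by (rule sum.image_gen) simp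
  also have "\<dots> = (\<Sum>q\<in>b ` {..<n}. real q * (\<Sum>i\<in>bin n b q. w i))"
    by (rule sum.cong) (auto simp: bin_def sum_distrib_left intro!: sum.cong)
  finally show ?thesis by (simp add: cost_def)
qed

lemma cost_nonneg: "valid_instance n s w \<Longrightarrow> 0 \<le> cost n w b"
  unfolding cost_eq_sum_items valid_instance_def
  by (intro sum_nonneg mult_nonneg_nonneg) (auto simp: less_imp_le)

lemma OPT_le_cost:
  assumes "valid_instance n s w" "feasible n s b"
  shows "OPT n s w \<le> cost n w b"
proof -
  have "bdd_below {cost n w b | b. feasible n s b}"
    using cost_nonneg[OF assms(1)] by (intro bdd_belowI[of _ 0]) blast
  then show ?thesis unfolding OPT_def using assms(2) by (blast intro: cInf_lower)
qed

lemma KB_ratio_ge_limit: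
  assumes valid: "\<And>t. valid_instance (n t) (s t) (w t)"
    and kb: "\<And>t. KB_output (n t) (s t) (w t) (b t)"
    and feas: "\<And>t. feasible (n t) (s t) (b' t)"
    and lim: "(\<lambda>t. cost (n t) (w t) (b t) / cost (n t) (w t) (b' t)) \<longlonglongrightarrow> r"
  shows "ereal r \<le> KB_ratio"
  unfolding KB_ratio_def
proof (rule Inf_greatest, clarify)
  fix \<rho> :: real
  assume \<rho>1: "1 \<le> \<rho>" and bound: "\<forall>n s w b. valid_instance n s w \<longrightarrow> KB_output n s w b \<longrightarrow>
    cost n w b \<le> \<rho> * OPT n s w"
  have "cost (n t) (w t) (b t) / cost (n t) (w t) (b' t) \<le> \<rho>" for t
  proof -
    have "cost (n t) (w t) (b t) \<le> \<rho> * OPT (n t) (s t) (w t)"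
      using bound valid kb by blast
    also have "\<dots> \<le> \<rho> * cost (n t) (w t) (b' t)"
      using OPT_le_cost[OF valid feas] \<rho>1 by (intro mult_left_mono) auto
    finally show ?thesis
      using \<rho>1 cost_nonneg[OF valid, of t "b' t"] by (cases "cost (n t) (w t) (b' t) = 0")
        (auto simp: pos_divide_le_eq)
  qed
  then have "r \<le> \<rho>" by (intro Lim_bounded[OF lim]) auto
  then show "ereal r \<le> ereal \<rho>" by simp
qed

lemma prefix_sum_interval_exists:
  fixes f :: "nat \<Rightarrow> nat"
  assumes "p < (\<Sum>l<m. f l)"
  shows "\<exists>j<m. (\<Sum>l<j. f l) \<le> p \<and> p < (\<Sum>l<Suc j. f l)"
  using assms
proof (induction m)
  case (Suc m)
  then show ?case by (cases "p < (\<Sum>l<m. f l)") (auto intro: less_SucI)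
qed simp

lemma prefix_sum_mono:
  fixes f :: "nat \<Rightarrow> nat"
  shows "j \<le> j' \<Longrightarrow> (\<Sum>l<j. f l) \<le> (\<Sum>l<j'. f l)"
  by (rule sum_mono2) auto

lemma prefix_sum_interval_unique:
  fixes f :: "nat \<Rightarrow> nat"
  assumes "(\<Sum>l<j. f l) \<le> p" "p < (\<Sum>l<Suc j. f l)"
    and "(\<Sum>l<j'. f l) \<le> p" "p < (\<Sum>l<Suc j'. f l)"
  shows "j = j'"
  using prefix_sum_mono[of "Suc j" j' f] prefix_sum_mono[of "Suc j'" j f] assms
  by (cases j j' rule: linorder_cases) auto

lemma sum_lessThan_add: "(\<Sum>i<a+b. g i) = (\<Sum>i<a. g i) + (\<Sum>r<b. g (a + r))"
  for g :: "nat \<Rightarrow> 'a::comm_monoid_add"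
  by (induction b) (auto simp: add.assoc)

lemma sum_lessThan_prefix_blocks:
  fixes N :: "nat \<Rightarrow> nat"
  shows "(\<Sum>i<(\<Sum>l<m. N l). g i) = (\<Sum>j<m. \<Sum>r<N j. g ((\<Sum>l<j. N l) + r))"
  by (induction m) (simp_all add: sum_lessThan_add)

lemma sum_lessThan_mult_div:
  assumes "0 < c"
  shows "(\<Sum>r<c * m. g (r div c)) = real c * (\<Sum>a<m. g a)"
proof (induction m)
  case (Suc m)
  have "(\<Sum>r<c * Suc m. g (r div c)) = (\<Sum>r<c * m + c. g (r div c))"
    by (simp add: add.commute)
  also have "\<dots> = (\<Sum>r<c * m. g (r div c)) + (\<Sum>r<c. g ((c * m + r) div c))"
    by (rule sum_lessThan_add)
  also have "(\<Sum>r<c. g ((c * m + r) div c)) = (\<Sum>r<c. g m)"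
    by (rule sum.cong) (use assms in auto)
  finally show ?case using Suc.IH by (simp add: algebra_simps)
qed simp

lemma sum_lessThan_of_nat: "(\<Sum>a<m. real a) = real m * (real m - 1) / 2"
  by (induction m) (auto simp: field_simps)

lemma summation_by_parts_lessThan:
  fixes \<rho> Z :: "nat \<Rightarrow> real"
  shows "(\<Sum>j<n. \<rho> j * (Z (Suc j) - Z j)) =
    (\<Sum>j<n. (\<rho> j - \<rho> (Suc j)) * Z (Suc j)) + \<rho> n * Z n - \<rho> 0 * Z 0"
  by (induction n) (auto simp: algebra_simps)

lemma geometric_sum_half: "(\<Sum>j<k. (1::real) / 2^(k-j)) = 1 - 1/2^k"
proof (induction k)
  case (Suc k)
  have "(\<Sum>j<Suc k. (1::real) / 2^(Suc k - j)) = (1/2) * (\<Sum>j<k. 1/2^(k-j)) + 1/2"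
    by (simp add: Suc_diff_le sum_distrib_left)
  then show ?case by (simp add: Suc.IH field_simps)
qed simp

lemma floor_scaled_tendsto:
  fixes a :: real assumes a: "0 \<le> a"
  shows "(\<lambda>t. real (nat \<lfloor>real t * a\<rfloor>) / real t) \<longlonglongrightarrow> a"
proof (rule tendsto_sandwich[where f = "\<lambda>t. a - 1 / real t" and h = "\<lambda>t. a"])
  have floor_eq: "real (nat \<lfloor>real t * a\<rfloor>) = real_of_int \<lfloor>real t * a\<rfloor>" for t
    using a by simp
  show "\<forall>\<^sub>F t in sequentially. a - 1 / real t \<le> real (nat \<lfloor>real t * a\<rfloor>) / real t"
    using eventually_ge_at_top[of "1::nat"]
  proof eventually_elim
    case (elim t)
    have "real t * a - 1 \<le> real_of_int \<lfloor>real t * a\<rfloor>" by linarith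
    then have "(real t * a - 1) / real t \<le> real_of_int \<lfloor>real t * a\<rfloor> / real t"
      using elim by (intro divide_right_mono) auto
    moreover have "(real t * a - 1) / real t = a - 1 / real t" using elim by (simp add: field_simps)
    ultimately show ?case by (simp add: floor_eq)
  qed
  show "\<forall>\<^sub>F t in sequentially. real (nat \<lfloor>real t * a\<rfloor>) / real t \<le> a"
    using eventually_ge_at_top[of "1::nat"]
  proof eventually_elim
    case (elim t)
    have "real_of_int \<lfloor>real t * a\<rfloor> \<le> real t * a" by linarith
    then show ?case unfolding floor_eq using elim by (simp add: field_simps)
  qed
  show "(\<lambda>t. a - 1 / real t) \<longlonglongrightarrow> a"
    using tendsto_diff[OF tendsto_const lim_inverse_n', of a] by simp
qed simp

lemma scalar_prod_transpose_mult_vec: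
  fixes A :: "'a :: comm_semiring_0 mat"
  assumes "A \<in> carrier_mat nr nc" "y \<in> carrier_vec nc" "z \<in> carrier_vec nr"
  shows "y \<bullet> (A\<^sup>T *\<^sub>v z) = (A *\<^sub>v y) \<bullet> z"
proof -
  have "y \<bullet> (A\<^sup>T *\<^sub>v z) = (A\<^sup>T *\<^sub>v z) \<bullet> y"
    by (rule comm_scalar_prod[of _ nc]) (use assms in auto)
  also have "\<dots> = z \<bullet> (A *\<^sub>v y)" by (rule transpose_vec_mult_scalar[OF assms])
  also have "\<dots> = (A *\<^sub>v y) \<bullet> z" by (rule comm_scalar_prod[of _ nr]) (use assms in auto)
  finally show ?thesis .
qed

lemma Diag_carrier: "d \<in> carrier_vec n \<Longrightarrow> Diag d \<in> carrier_mat n n"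
  by (simp add: Diag_def)

lemma transpose_Diag: "(Diag d)\<^sup>T = Diag d"
  by (rule eq_matI) (auto simp: Diag_def)

lemma Diag_mult_vec:
  assumes "y \<in> carrier_vec n" "d \<in> carrier_vec n"
  shows "Diag d *\<^sub>v y = vec n (\<lambda>i. d $ i * y $ i)"
proof (rule eq_vecI)
  fix i assume "i < dim_vec (vec n (\<lambda>i. d $ i * y $ i))"
  then have i: "i < n" by simp
  have "(Diag d *\<^sub>v y) $ i = (\<Sum>j<n. (if i = j then d $ i else 0) * y $ j)"
    using i assms by (simp add: Diag_def scalar_prod_def row_def lessThan_atLeast0)
  also have "\<dots> = (\<Sum>j<n. if j = i then d $ i * y $ i else 0)" by (rule sum.cong) auto
  also have "\<dots> = d $ i * y $ i" using i by simp
  finally show "(Diag d *\<^sub>v y) $ i = vec n (\<lambda>i. d $ i * y $ i) $ i" using i by simp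
qed (use assms in \<open>simp add: Diag_def\<close>)

lemma scalar_prod_Diag_mult_vec:
  assumes "y \<in> carrier_vec n" "d \<in> carrier_vec n"
  shows "y \<bullet> (Diag d *\<^sub>v y) = (\<Sum>i<n. d $ i * (y $ i)^2)"
  using assms
  by (simp add: Diag_mult_vec scalar_prod_def lessThan_atLeast0 power2_eq_square mult_ac)

lemma L_mat_carrier: "L_mat k \<in> carrier_mat (k+1) (k+1)"
  by (simp add: L_mat_def)

lemma L_mat_mult_vec:
  assumes "y \<in> carrier_vec (k+1)"
  shows "L_mat k *\<^sub>v y = vec (k+1) (\<lambda>i. \<Sum>j\<le>i. y $ j)"
proof (rule eq_vecI)
  fix i assume "i < dim_vec (vec (k+1) (\<lambda>i. \<Sum>j\<le>i. y $ j))"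
  then have i: "i < k+1" by simp
  have "(L_mat k *\<^sub>v y) $ i = (\<Sum>j<k+1. (if j \<le> i then 1 else 0) * y $ j)"
    using i assms by (simp add: L_mat_def scalar_prod_def row_def lessThan_atLeast0)
  also have "\<dots> = (\<Sum>j<k+1. if j \<le> i then y $ j else 0)" by (rule sum.cong) auto
  also have "\<dots> = (\<Sum>j\<in>{..<k+1} \<inter> {j. j \<le> i}. y $ j)"
    by (simp add: sum.inter_restrict)
  also have "{..<k+1} \<inter> {j. j \<le> i} = {..i}" using i by auto
  finally show "(L_mat k *\<^sub>v y) $ i = vec (k+1) (\<lambda>i. \<Sum>j\<le>i. y $ j) $ i" using i by simp
qed (simp add: L_mat_def)

text \<open>Both quadratic forms in \<open>R(x)\<close> are \<open>U\<close>-weighted squared norms: of \<open>L x\<close> in the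
  denominator and of \<open>L V L x\<close> in the numerator, as \<open>U\<close> and \<open>V\<close> are symmetric.\<close>
lemma R_val_eq_quadratic_forms:
  assumes x: "x \<in> carrier_vec (k+1)"
  defines "X \<equiv> L_mat k *\<^sub>v x" and "Y \<equiv> L_mat k *\<^sub>v (Diag (v_vec k) *\<^sub>v (L_mat k *\<^sub>v x))"
  shows "R_val k x = (Y \<bullet> (Diag (u_vec k) *\<^sub>v Y)) / (X \<bullet> (Diag (u_vec k) *\<^sub>v X))"
proof -
  define n where "n = k+1"
  define L U V where "L = L_mat k" and "U = Diag (u_vec k)" and "V = Diag (v_vec k)"
  have carriers: "L \<in> carrier_mat n n" "L\<^sup>T \<in> carrier_mat n n"
    "U \<in> carrier_mat n n" "V \<in> carrier_mat n n"
    using L_mat_carrier Diag_carrier by (auto simp: L_def U_def V_def u_vec_def v_vec_def n_def)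
  have xn: "x \<in> carrier_vec n" using x by (simp add: n_def)
  have XY: "X \<in> carrier_vec n" "Y \<in> carrier_vec n"
    using carriers xn by (auto simp: X_def Y_def L_def V_def)
  have X_L: "X = L *\<^sub>v x" and Y_X: "Y = L *\<^sub>v (V *\<^sub>v X)"
    by (simp_all add: X_def Y_def L_def V_def)
  have mult_mat_vec: "(A * B) *\<^sub>v v = A *\<^sub>v (B *\<^sub>v v)"
    if "A \<in> carrier_mat n n" "B \<in> carrier_mat n n" "v \<in> carrier_vec n" for A B v
    using that by (rule assoc_mult_mat_vec)
  have mult_carrier: "A * B \<in> carrier_mat n n"
    if "A \<in> carrier_mat n n" "B \<in> carrier_mat n n" for A B
    using that by (rule mult_carrier_mat)
  have "x \<bullet> ((L\<^sup>T * V * L\<^sup>T * U * L * V * L) *\<^sub>v x) = x \<bullet> (L\<^sup>T *\<^sub>v (V *\<^sub>v (L\<^sup>T *\<^sub>v (U *\<^sub>v Y))))"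
    using carriers xn by (simp add: Y_X X_L mult_mat_vec mult_carrier del: assoc_mult_mat)
  also have "\<dots> = X \<bullet> (V *\<^sub>v (L\<^sup>T *\<^sub>v (U *\<^sub>v Y)))"
    unfolding X_L by (rule scalar_prod_transpose_mult_vec) (use carriers xn XY in auto)
  also have "\<dots> = X \<bullet> (V\<^sup>T *\<^sub>v (L\<^sup>T *\<^sub>v (U *\<^sub>v Y)))"
    by (simp add: V_def transpose_Diag)
  also have "\<dots> = (V *\<^sub>v X) \<bullet> (L\<^sup>T *\<^sub>v (U *\<^sub>v Y))"
    by (rule scalar_prod_transpose_mult_vec) (use carriers XY in auto)
  also have "\<dots> = Y \<bullet> (U *\<^sub>v Y)"
    unfolding Y_X by (rule scalar_prod_transpose_mult_vec) (use carriers XY in auto)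
  finally have num: "x \<bullet> ((L\<^sup>T * V * L\<^sup>T * U * L * V * L) *\<^sub>v x) = Y \<bullet> (U *\<^sub>v Y)" .
  have "x \<bullet> ((L\<^sup>T * U * L) *\<^sub>v x) = X \<bullet> (U *\<^sub>v X)"
    using carriers xn XY by (simp add: scalar_prod_transpose_mult_vec[of L] X_L mult_mat_vec mult_carrier del: assoc_mult_mat)
  with num show ?thesis by (simp add: R_val_def Let_def L_def U_def V_def)
qed

lemma R_val_eq_sums:
  assumes x: "x \<in> carrier_vec (k+1)"
  shows "R_val k x = (\<Sum>i<k+1. u_vec k $ i * (\<Sum>j\<le>i. v_vec k $ j * (\<Sum>l\<le>j. x $ l))^2) /
                     (\<Sum>i<k+1. u_vec k $ i * (\<Sum>j\<le>i. x $ j)^2)"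
proof -
  have u: "u_vec k \<in> carrier_vec (k+1)" and v: "v_vec k \<in> carrier_vec (k+1)"
    by (simp_all add: u_vec_def v_vec_def)
  have X: "L_mat k *\<^sub>v x = vec (k+1) (\<lambda>i. \<Sum>j\<le>i. x $ j)"
    by (rule L_mat_mult_vec[OF x])
  have VX: "Diag (v_vec k) *\<^sub>v vec (k+1) (\<lambda>i. \<Sum>j\<le>i. x $ j) =
      vec (k+1) (\<lambda>i. v_vec k $ i * (\<Sum>j\<le>i. x $ j))"
    by (simp add: Diag_mult_vec[OF _ v]) (intro eq_vecI; simp)
  have LVX: "L_mat k *\<^sub>v vec (k+1) (\<lambda>i. v_vec k $ i * (\<Sum>j\<le>i. x $ j)) =
      vec (k+1) (\<lambda>i. \<Sum>j\<le>i. v_vec k $ j * (\<Sum>l\<le>j. x $ l))"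
    by (simp add: L_mat_mult_vec) (intro eq_vecI; auto intro!: sum.cong)
  show ?thesis
    unfolding R_val_eq_quadratic_forms[OF x] X VX LVX
    by (subst (1 2) scalar_prod_Diag_mult_vec[OF _ u]) auto
qed

definition per_bin :: "nat \<Rightarrow> nat \<Rightarrow> nat" where
  "per_bin k j = (if j = 0 then 2^k else 2^(k+1-j) - 1)"

definition type_weight :: "nat \<Rightarrow> nat \<Rightarrow> real" where
  "type_weight k j = (if j = 0 then 1/2^k else 1/2^(k+1-j))"

definition size_excess :: "nat \<Rightarrow> real" where
  "size_excess k = 1 / (real k * 4^(k+1))"

text \<open>Types \<open>j \<ge> 1\<close> are enlarged by \<open>size_excess k\<close>, type \<open>0\<close> shrunk by \<open>k\<close> times as much,
  so that the sizes of all \<open>k + 1\<close> types add up to exactly \<open>1\<close>.\<close>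
definition type_size :: "nat \<Rightarrow> nat \<Rightarrow> real" where
  "type_size k j = (if j = 0 then 1/2^k - real k * size_excess k else type_weight k j + size_excess k)"

text \<open>Items are numbered type by type: those of type \<open>j\<close> occupy the indices from
  \<open>type_start k B j\<close> on, and \<open>item_rank\<close> is the position of an item within its type.\<close>
definition type_start :: "nat \<Rightarrow> (nat \<Rightarrow> nat) \<Rightarrow> nat \<Rightarrow> nat" where
  "type_start k B j = (\<Sum>l<j. per_bin k l * B l)"

definition num_items :: "nat \<Rightarrow> (nat \<Rightarrow> nat) \<Rightarrow> nat" where
  "num_items k B = type_start k B (k+1)"

definition item_type :: "nat \<Rightarrow> (nat \<Rightarrow> nat) \<Rightarrow> nat \<Rightarrow> nat" where
  "item_type k B i = (THE j. j \<le> k \<and> type_start k B j \<le> i \<and> i < type_start k B (Suc j))"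

definition item_rank :: "nat \<Rightarrow> (nat \<Rightarrow> nat) \<Rightarrow> nat \<Rightarrow> nat" where
  "item_rank k B i = i - type_start k B (item_type k B i)"

definition item_size :: "nat \<Rightarrow> (nat \<Rightarrow> nat) \<Rightarrow> nat \<Rightarrow> real" where
  "item_size k B i = type_size k (item_type k B i)"

definition item_weight :: "nat \<Rightarrow> (nat \<Rightarrow> nat) \<Rightarrow> nat \<Rightarrow> real" where
  "item_weight k B i = type_weight k (item_type k B i)"

definition bins_before :: "(nat \<Rightarrow> nat) \<Rightarrow> nat \<Rightarrow> nat" where
  "bins_before B j = (\<Sum>l<j. B l)"

definition kb_bin :: "nat \<Rightarrow> (nat \<Rightarrow> nat) \<Rightarrow> nat \<Rightarrow> nat" where
  "kb_bin k B i = 1 + bins_before B (item_type k B i) + item_rank k B i div per_bin k (item_type k B i)"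

definition rank_bin :: "nat \<Rightarrow> (nat \<Rightarrow> nat) \<Rightarrow> nat \<Rightarrow> nat" where
  "rank_bin k B i = 1 + item_rank k B i"

lemma per_bin_pos: "j \<le> k \<Longrightarrow> 0 < per_bin k j"
proof -
  assume "j \<le> k"
  then have "(2::nat)^1 \<le> 2^(k+1-j)" by (intro power_increasing) auto
  then show ?thesis by (simp add: per_bin_def)
qed

lemma of_nat_per_bin: "0 < j \<Longrightarrow> real (per_bin k j) = 2^(k+1-j) - 1"
  by (simp add: per_bin_def of_nat_diff)

lemma per_bin_type_weight_0: "real (per_bin k 0) * type_weight k 0 = 1"
  by (simp add: per_bin_def type_weight_def)

lemma per_bin_type_weight:
  "type_weight k j * real (per_bin k j) = (if j = 0 then 1 else 1 - 1/2^(k+1-j))"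
proof (cases "j = 0")
  case True then show ?thesis by (simp add: type_weight_def per_bin_def)
next
  case False then show ?thesis by (simp add: type_weight_def of_nat_per_bin field_simps)
qed

lemma type_weight_pos: "0 < type_weight k j"
  by (simp add: type_weight_def)

lemma type_weight_dyadic:
  assumes "1 \<le> j" "j \<le> l" "l \<le> k"
  shows "type_weight k l = real (2^(l-j)) / 2^(k+1-j)"
proof -
  have "k+1-j = (k+1-l) + (l-j)" using assms by auto
  then have "(2::real)^(k+1-j) = 2^(k+1-l) * 2^(l-j)" by (simp add: power_add)
  then show ?thesis using assms by (simp add: type_weight_def)
qed

lemma type_weight_dyadic_0:
  assumes "l \<le> k"
  shows "type_weight k l = real (2^(l-1)) / 2^k"
proof (cases "l = 0")
  case False
  have "k = (k+1-l) + (l-1)" using assms False by auto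
  then have "(2::real)^k = 2^(k+1-l) * 2^(l-1)" by (metis power_add)
  then show ?thesis using False by (simp add: type_weight_def)
qed (simp add: type_weight_def)

lemma type_start_Suc: "type_start k B (Suc j) = type_start k B j + per_bin k j * B j"
  by (simp add: type_start_def)

lemma bins_before_Suc: "bins_before B (Suc j) = bins_before B j + B j"
  by (simp add: bins_before_def)

lemma item_type_eqI:
  assumes "j \<le> k" "type_start k B j \<le> i" "i < type_start k B (Suc j)"
  shows "item_type k B i = j"
  unfolding item_type_def
proof (rule the_equality)
  fix j' assume "j' \<le> k \<and> type_start k B j' \<le> i \<and> i < type_start k B (Suc j')"
  then show "j' = j"
    using prefix_sum_interval_unique[of "\<lambda>l. per_bin k l * B l" j' i j] assms
    unfolding type_start_def by auto
qed (use assms in simp)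

lemma item_type_bounds:
  assumes "i < num_items k B"
  shows "item_type k B i \<le> k" "type_start k B (item_type k B i) \<le> i"
    "i < type_start k B (Suc (item_type k B i))"
proof -
  obtain j where "j < k+1" "type_start k B j \<le> i" "i < type_start k B (Suc j)"
    using prefix_sum_interval_exists[of i "\<lambda>l. per_bin k l * B l" "k+1"] assms
    unfolding num_items_def type_start_def by auto
  moreover then have "item_type k B i = j" by (intro item_type_eqI) auto
  ultimately show "item_type k B i \<le> k" "type_start k B (item_type k B i) \<le> i"
    "i < type_start k B (Suc (item_type k B i))" by auto
qed

lemma item_rank_bound:
  assumes "i < num_items k B"
  shows "item_rank k B i < per_bin k (item_type k B i) * B (item_type k B i)"
  using item_type_bounds[OF assms] by (auto simp: item_rank_def type_start_Suc)

lemma item_decompose: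
  "i < num_items k B \<Longrightarrow> i = type_start k B (item_type k B i) + item_rank k B i"
  using item_type_bounds by (simp add: item_rank_def)

lemma item_type_rank_block:
  assumes "j \<le> k" "r < per_bin k j * B j"
  shows "item_type k B (type_start k B j + r) = j" "item_rank k B (type_start k B j + r) = r"
proof -
  show type: "item_type k B (type_start k B j + r) = j"
    by (rule item_type_eqI) (use assms in \<open>auto simp: type_start_Suc\<close>)
  then show "item_rank k B (type_start k B j + r) = r" by (simp add: item_rank_def)
qed

lemma type_start_le_num_items: "j \<le> k \<Longrightarrow> type_start k B (Suc j) \<le> num_items k B"
  unfolding num_items_def type_start_def by (rule prefix_sum_mono) simp

lemma sum_items_by_type:
  "(\<Sum>i<num_items k B. g i) = (\<Sum>j<k+1. \<Sum>r<per_bin k j * B j. g (type_start k B j + r))"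
  unfolding num_items_def type_start_def by (rule sum_lessThan_prefix_blocks)

lemma cost_kb_bin: "cost (num_items k B) (item_weight k B) (kb_bin k B) =
   (\<Sum>j<k+1. type_weight k j * real (per_bin k j) *
      (real (B j) * (1 + real (bins_before B j)) + real (B j) * (real (B j) - 1) / 2))"
proof -
  have "cost (num_items k B) (item_weight k B) (kb_bin k B) =
      (\<Sum>j<k+1. \<Sum>r<per_bin k j * B j. type_weight k j *
         (1 + real (bins_before B j) + real (r div per_bin k j)))"
    unfolding cost_eq_sum_items sum_items_by_type
    by (intro sum.cong refl) (auto simp: item_type_rank_block kb_bin_def item_weight_def)
  also have "\<dots> = (\<Sum>j<k+1. type_weight k j * real (per_bin k j) *
      (\<Sum>a<B j. 1 + real (bins_before B j) + real a))"
  proof (intro sum.cong refl)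
    fix j assume "j \<in> {..<k+1}"
    then show "(\<Sum>r<per_bin k j * B j. type_weight k j *
        (1 + real (bins_before B j) + real (r div per_bin k j))) =
      type_weight k j * real (per_bin k j) * (\<Sum>a<B j. 1 + real (bins_before B j) + real a)"
      using sum_lessThan_mult_div[OF per_bin_pos[of j k],
          of "\<lambda>a. type_weight k j * (1 + real (bins_before B j) + real a)" "B j"]
      by (simp add: sum_distrib_left mult_ac)
  qed
  also have "\<dots> = (\<Sum>j<k+1. type_weight k j * real (per_bin k j) *
      (real (B j) * (1 + real (bins_before B j)) + real (B j) * (real (B j) - 1) / 2))"
    by (simp add: sum.distrib sum_lessThan_of_nat)
  finally show ?thesis .
qed

lemma cost_rank_bin: "cost (num_items k B) (item_weight k B) (rank_bin k B) =
   (\<Sum>j<k+1. type_weight k j * (real (per_bin k j * B j) +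
      real (per_bin k j * B j) * (real (per_bin k j * B j) - 1) / 2))"
proof -
  have "cost (num_items k B) (item_weight k B) (rank_bin k B) =
      (\<Sum>j<k+1. \<Sum>r<per_bin k j * B j. type_weight k j * (1 + real r))"
    unfolding cost_eq_sum_items sum_items_by_type
    by (intro sum.cong refl) (auto simp: item_type_rank_block rank_bin_def item_weight_def)
  then show ?thesis
    by (simp add: sum_distrib_left[symmetric] sum.distrib sum_lessThan_of_nat)
qed

context
  fixes k :: nat
  assumes k1: "1 \<le> k"
begin

lemma size_excess_pos: "0 < size_excess k"
  using k1 by (simp add: size_excess_def)

lemma k_size_excess: "real k * size_excess k = 1/4^(k+1)"
  using k1 by (simp add: size_excess_def)

lemma size_excess_le: "size_excess k \<le> 1/4^(k+1)"
proof -
  have "size_excess k \<le> real k * size_excess k"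
    using k1 size_excess_pos by (simp add: mult_le_cancel_right1)
  then show ?thesis using k_size_excess by simp
qed

lemma type_size_pos_le_1:
  assumes "j \<le> k"
  shows "0 < type_size k j \<and> type_size k j \<le> 1"
proof (cases "j = 0")
  case True
  have "(2::real)^k \<le> 4^k" by (rule power_mono) auto
  moreover have "(0::real) < 4^k" by simp
  ultimately have "(2::real)^k < 4 * 4^k" by linarith
  then have "(1::real)/4^(k+1) < 1/2^k" by (intro divide_strict_left_mono) auto
  moreover have "(1::real)/2^k \<le> 1" "(0::real) < 1/4^(k+1)" by simp_all
  moreover have "type_size k 0 = 1/2^k - 1/4^(k+1)" using k_size_excess by (simp add: type_size_def)
  ultimately show ?thesis unfolding True by linarith
next
  case False
  have "(2::real)^1 \<le> 2^(k+1-j)" by (rule power_increasing) (use assms in auto)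
  then have "type_weight k j \<le> 1/2" using False by (simp add: type_weight_def frac_le)
  moreover have "(2::real) \<le> 4^(k+1)" by (rule order.trans[of _ "4^1"]) (auto intro: power_increasing)
  then have "(1::real)/4^(k+1) \<le> 1/2" by (intro divide_left_mono) auto
  then have "size_excess k \<le> 1/2" using size_excess_le by linarith
  ultimately show ?thesis
    using False size_excess_pos type_weight_pos[of k j] by (simp add: type_size_def)
qed

lemma sum_type_size: "(\<Sum>j<k+1. type_size k j) = 1"
proof -
  have "(\<Sum>j<k+1. type_size k j) = type_size k 0 + (\<Sum>j<k. type_size k (Suc j))"
    by (simp add: sum.lessThan_Suc_shift del: sum.lessThan_Suc)
  also have "(\<Sum>j<k. type_size k (Suc j)) = (\<Sum>j<k. 1/2^(k-j)) + real k * size_excess k"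
    by (simp add: type_size_def type_weight_def sum.distrib)
  finally show ?thesis by (simp add: geometric_sum_half type_size_def)
qed

lemma valid_instance: "valid_instance (num_items k B) (item_size k B) (item_weight k B)"
  unfolding valid_instance_def item_size_def item_weight_def
  using item_type_bounds type_size_pos_le_1 type_weight_pos by blast

text \<open>A bin of \<open>rank_bin\<close> holds at most one item of each type, and all types together have size \<open>1\<close>.\<close>
lemma feasible_rank_bin: "feasible (num_items k B) (item_size k B) (rank_bin k B)"
  unfolding feasible_def
proof (intro conjI allI impI)
  fix q
  let ?S = "bin (num_items k B) (rank_bin k B) q"
  have inj: "inj_on (item_type k B) ?S"
    by (rule inj_onI) (metis (mono_tags, lifting) bin_def item_decompose mem_Collect_eq rank_bin_def
        add_left_cancel)
  have types: "item_type k B ` ?S \<subseteq> {..<k+1}"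
    using item_type_bounds by (auto simp: bin_def less_Suc_eq_le)
  have "(\<Sum>i\<in>?S. item_size k B i) = (\<Sum>j\<in>item_type k B ` ?S. type_size k j)"
    unfolding item_size_def by (rule sum.reindex[OF inj, symmetric, unfolded comp_def])
  also have "\<dots> \<le> (\<Sum>j<k+1. type_size k j)"
    using type_size_pos_le_1 by (intro sum_mono2[OF _ types]) (auto simp: less_imp_le)
  finally show "(\<Sum>i\<in>?S. item_size k B i) \<le> 1" using sum_type_size by simp
qed (simp add: rank_bin_def)

lemma type_size_ge: "1/2^(k+1) \<le> type_size k j"
proof (cases "j = 0")
  case True
  have "(1::real)/4^(k+1) \<le> 1/2^(k+1)" by (intro divide_left_mono power_mono) auto
  moreover have "type_size k 0 = 1/2^k - 1/4^(k+1)" using k_size_excess by (simp add: type_size_def)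
  moreover have "(1::real)/2^k - 1/2^(k+1) = 1/2^(k+1)" by (simp add: field_simps)
  ultimately show ?thesis unfolding True by linarith
next
  case False
  have "(2::real)^(k+1-j) \<le> 2^(k+1)" by (rule power_increasing) auto
  then have "1/2^(k+1) \<le> type_weight k j" using False by (simp add: type_weight_def frac_le)
  then show ?thesis using False size_excess_pos by (simp add: type_size_def)
qed

lemma type_weight_le_type_size: "type_weight k j - 1/4^(k+1) \<le> type_size k j"
proof (cases "j = 0")
  case False
  have "type_size k j = type_weight k j + size_excess k"
    using False by (simp add: type_size_def)
  moreover have "0 < (1::real)/4^(k+1)" by simp
  ultimately show ?thesis using size_excess_pos by linarith
qed (simp add: k_size_excess type_size_def type_weight_def)

text \<open>The weights of types \<open>\<ge> j\<close> are multiples of \<open>1/2^(k+1-j)\<close>, and the size excess of each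
  item keeps their total weight strictly below \<open>1\<close>.\<close>
lemma knapsack_weight_le_pos:
  fixes \<tau> :: "'a \<Rightarrow> nat"
  assumes j: "1 \<le> j" "j \<le> k" and S: "finite S" "S \<noteq> {}"
    and types: "\<forall>i\<in>S. j \<le> \<tau> i \<and> \<tau> i \<le> k"
    and size: "(\<Sum>i\<in>S. type_size k (\<tau> i)) \<le> 1"
  shows "(\<Sum>i\<in>S. type_weight k (\<tau> i)) \<le> real (per_bin k j) * type_weight k j"
proof -
  define m where "m = k+1-j"
  define Z where "Z = (\<Sum>i\<in>S. (2::nat)^(\<tau> i - j))"
  have weight: "(\<Sum>i\<in>S. type_weight k (\<tau> i)) = real Z / 2^m"
    unfolding Z_def m_def of_nat_sum sum_divide_distrib
    by (rule sum.cong) (use types type_weight_dyadic j in auto)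
  have "(\<Sum>i\<in>S. type_size k (\<tau> i)) = (\<Sum>i\<in>S. type_weight k (\<tau> i)) + real (card S) * size_excess k"
  proof -
    have "type_size k (\<tau> i) = type_weight k (\<tau> i) + size_excess k" if "i \<in> S" for i
      using types j that by (auto simp: type_size_def)
    then show ?thesis by (simp add: sum.distrib)
  qed
  moreover have "0 < real (card S) * size_excess k"
    using S size_excess_pos by (simp add: card_gt_0_iff)
  ultimately have "real Z / 2^m < 1" using size weight by linarith
  then have "real Z < 2^m" by (simp add: divide_less_eq)
  then have "Z < 2^m" by (metis of_nat_less_iff of_nat_numeral of_nat_power)
  then have "real (Z + 1) \<le> real (2^m)" by (simp only: of_nat_le_iff)
  then have "real Z / 2^m \<le> (2^m - 1) / 2^m" by (simp add: divide_right_mono)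
  then show ?thesis unfolding weight using j by (simp add: of_nat_per_bin type_weight_def m_def)
qed

text \<open>At most \<open>2^(k+1)\<close> items fit into a bin, so the shrinking of type \<open>0\<close> lets their weight
  exceed their size by at most \<open>1/2^(k+1)\<close>; as weights are multiples of \<open>1/2^k\<close>, the weight is
  at most \<open>1\<close>.\<close>
lemma knapsack_weight_le_0:
  fixes \<tau> :: "'a \<Rightarrow> nat"
  assumes S: "finite S" and types: "\<forall>i\<in>S. \<tau> i \<le> k"
    and size: "(\<Sum>i\<in>S. type_size k (\<tau> i)) \<le> 1"
  shows "(\<Sum>i\<in>S. type_weight k (\<tau> i)) \<le> 1"
proof -
  define Z where "Z = (\<Sum>i\<in>S. (2::nat)^(\<tau> i - 1))"
  have weight: "(\<Sum>i\<in>S. type_weight k (\<tau> i)) = real Z / 2^k"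
    unfolding Z_def of_nat_sum sum_divide_distrib
    by (rule sum.cong) (use types type_weight_dyadic_0 in auto)
  have "real (card S) / 2^(k+1) \<le> (\<Sum>i\<in>S. type_size k (\<tau> i))"
    using sum_mono[of S "\<lambda>i. 1/2^(k+1) :: real"] type_size_ge by simp
  then have "real (card S) \<le> 2^(k+1) * (\<Sum>i\<in>S. type_size k (\<tau> i))" by (simp add: field_simps)
  also have "\<dots> \<le> 2^(k+1)" using mult_left_mono[OF size, of "2^(k+1)"] by simp
  finally have card: "real (card S) * (1/4^(k+1)) \<le> 2^(k+1) * (1/4^(k+1))"
    by (intro mult_right_mono) auto
  have "(\<Sum>i\<in>S. type_weight k (\<tau> i)) - real (card S) * (1/4^(k+1)) \<le> (\<Sum>i\<in>S. type_size k (\<tau> i))"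
    using sum_mono[of S "\<lambda>i. type_weight k (\<tau> i) - 1/4^(k+1)"] type_weight_le_type_size by (simp add: sum_subtractf)
  moreover have "(4::real)^(k+1) = 2^(k+1) * 2^(k+1)"
    by (metis mult_2 numeral_Bit0 power_mult_distrib)
  then have "(2::real)^(k+1) * (1/4^(k+1)) = 1/2^(k+1)" by simp
  moreover have "(1::real)/2^(k+1) < 1/2^k" by (simp add: field_simps)
  ultimately have "real Z / 2^k < 1 + 1/2^k" using size card weight by linarith
  then have "real Z < real (2^k + 1)" by (simp add: field_simps)
  then have "Z \<le> 2^k" by (simp only: of_nat_less_iff)
  then have "real Z \<le> real (2^k)" by (simp only: of_nat_le_iff)
  then show ?thesis by (simp add: weight)
qed

lemma knapsack_weight_le:
  fixes \<tau> :: "'a \<Rightarrow> nat"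
  assumes "j \<le> k" "finite S" "\<forall>i\<in>S. j \<le> \<tau> i \<and> \<tau> i \<le> k"
    and "(\<Sum>i\<in>S. type_size k (\<tau> i)) \<le> 1"
  shows "(\<Sum>i\<in>S. type_weight k (\<tau> i)) \<le> real (per_bin k j) * type_weight k j"
proof (cases "j = 0")
  case True
  then show ?thesis using knapsack_weight_le_0 assms per_bin_type_weight_0 by simp
next
  case False
  then show ?thesis
    using knapsack_weight_le_pos[of j S \<tau>] assms type_weight_pos per_bin_pos
    by (cases "S = {}") (auto intro: mult_nonneg_nonneg less_imp_le)
qed

lemma per_bin_type_size_le_1:
  assumes "j \<le> k"
  shows "real (per_bin k j) * type_size k j \<le> 1"
proof (cases "j = 0")
  case True
  have "real (per_bin k 0) * type_size k 0 =
      real (per_bin k 0) * type_weight k 0 - real (per_bin k 0) * (real k * size_excess k)"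
    by (simp add: type_size_def type_weight_def right_diff_distrib)
  moreover have "0 \<le> real (per_bin k 0) * (real k * size_excess k)"
    using size_excess_pos by simp
  ultimately show ?thesis using True per_bin_type_weight_0 by simp
next
  case False
  define m where "m = k+1-j"
  have m: "1 \<le> m" "m \<le> k" using False assms by (auto simp: m_def)
  have "(2::real)^m * 2^m \<le> 2^k * 2^k" using m by (intro mult_mono power_increasing) auto
  also have "\<dots> \<le> 4^(k+1)" by (simp add: power_mult_distrib[symmetric])
  finally have pow: "(2::real)^m * 2^m \<le> 4^(k+1)" .
  have "(2^m - 1) * size_excess k \<le> 2^m * size_excess k"
    using size_excess_pos by (simp add: mult_right_mono)
  also have "\<dots> \<le> 2^m * (1/4^(k+1))" using size_excess_le by (intro mult_left_mono) auto
  also have "\<dots> \<le> 2^m * (1/(2^m * 2^m))" using pow by (intro mult_left_mono divide_left_mono) auto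
  also have "\<dots> = 1/2^m" by simp
  finally have "(2^m - 1) * size_excess k \<le> 1/2^m" .
  moreover have "real (per_bin k j) * type_size k j = (2^m - 1) * (1/2^m) + (2^m - 1) * size_excess k"
    using False by (simp add: type_size_def type_weight_def of_nat_per_bin m_def distrib_left)
  moreover have "(2^m - 1) * (1/2^m) = 1 - (1::real)/2^m" by (simp add: field_simps)
  ultimately show ?thesis by linarith
qed

lemma kb_bin_bounds:
  assumes "i < num_items k B"
  shows "bins_before B (item_type k B i) < kb_bin k B i"
    "kb_bin k B i \<le> bins_before B (Suc (item_type k B i))"
proof -
  have "item_rank k B i < B (item_type k B i) * per_bin k (item_type k B i)"
    using item_rank_bound[OF assms] by (simp add: mult.commute)
  then have "item_rank k B i div per_bin k (item_type k B i) < B (item_type k B i)"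
    by (rule less_mult_imp_div_less)
  then show "bins_before B (item_type k B i) < kb_bin k B i"
    "kb_bin k B i \<le> bins_before B (Suc (item_type k B i))"
    by (auto simp: kb_bin_def bins_before_Suc)
qed

lemma kb_bin_eq_block:
  assumes j: "j \<le> k" "bins_before B j \<le> p" "p < bins_before B (Suc j)"
  defines "a \<equiv> p - bins_before B j"
  shows "bin (num_items k B) (kb_bin k B) (Suc p) =
    (\<lambda>r. type_start k B j + (per_bin k j * a + r)) ` {..<per_bin k j}"
    and "\<And>r. r < per_bin k j \<Longrightarrow> per_bin k j * a + r < per_bin k j * B j"
proof -
  have c0: "0 < per_bin k j" using per_bin_pos[OF j(1)] .
  have aB: "a < B j" using j by (simp add: a_def bins_before_Suc)
  show block: "per_bin k j * a + r < per_bin k j * B j" if "r < per_bin k j" for r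
  proof -
    have "per_bin k j * a + r < per_bin k j * (a + 1)" using that by simp
    also have "\<dots> \<le> per_bin k j * B j" using aB by (intro mult_left_mono) auto
    finally show ?thesis .
  qed
  show "bin (num_items k B) (kb_bin k B) (Suc p) =
    (\<lambda>r. type_start k B j + (per_bin k j * a + r)) ` {..<per_bin k j}"
  proof (intro equalityI subsetI)
    fix i assume "i \<in> bin (num_items k B) (kb_bin k B) (Suc p)"
    then have i: "i < num_items k B" and bin_i: "kb_bin k B i = Suc p" by (auto simp: bin_def)
    have "item_type k B i = j"
      using prefix_sum_interval_unique[of B "item_type k B i" p j] kb_bin_bounds[OF i] bin_i j
      by (simp add: bins_before_def)
    then have "item_rank k B i div per_bin k j = a"
      using bin_i by (simp add: kb_bin_def a_def)
    then have "i = type_start k B j + (per_bin k j * a + item_rank k B i mod per_bin k j)"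
      using item_decompose[OF i] \<open>item_type k B i = j\<close> div_mult_mod_eq[of "item_rank k B i" "per_bin k j"]
      by (simp add: mult.commute)
    then show "i \<in> (\<lambda>r. type_start k B j + (per_bin k j * a + r)) ` {..<per_bin k j}"
      using c0 by (intro rev_image_eqI[of "item_rank k B i mod per_bin k j"]) auto
  next
    fix i assume "i \<in> (\<lambda>r. type_start k B j + (per_bin k j * a + r)) ` {..<per_bin k j}"
    then obtain r where r: "r < per_bin k j" and i: "i = type_start k B j + (per_bin k j * a + r)"
      by auto
    note type_rank = item_type_rank_block[where B=B, OF j(1) block[OF r], folded i]
    have "kb_bin k B i = Suc p"
      using r j by (simp add: kb_bin_def type_rank a_def)
    moreover have "i < num_items k B"
      using i block[OF r] type_start_le_num_items[OF j(1), of B] by (simp add: type_start_Suc)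
    ultimately show "i \<in> bin (num_items k B) (kb_bin k B) (Suc p)" by (simp add: bin_def)
  qed
qed

lemma kb_bin_sums:
  assumes "j \<le> k" "bins_before B j \<le> p" "p < bins_before B (Suc j)"
  shows "(\<Sum>i\<in>bin (num_items k B) (kb_bin k B) (Suc p). item_size k B i) =
      real (per_bin k j) * type_size k j"
    and "(\<Sum>i\<in>bin (num_items k B) (kb_bin k B) (Suc p). item_weight k B i) =
      real (per_bin k j) * type_weight k j"
proof -
  define f where "f = (\<lambda>r. type_start k B j + (per_bin k j * (p - bins_before B j) + r))"
  have inj: "inj_on f {..<per_bin k j}" by (rule inj_onI) (simp add: f_def)
  have types: "item_type k B (f r) = j" if "r < per_bin k j" for r
    unfolding f_def using item_type_rank_block(1)[where B=B, OF assms(1) kb_bin_eq_block(2)[OF assms that]] .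
  show "(\<Sum>i\<in>bin (num_items k B) (kb_bin k B) (Suc p). item_size k B i) =
      real (per_bin k j) * type_size k j"
    unfolding kb_bin_eq_block(1)[OF assms] f_def[symmetric] sum.reindex[OF inj]
    by (simp add: item_size_def types)
  show "(\<Sum>i\<in>bin (num_items k B) (kb_bin k B) (Suc p). item_weight k B i) =
      real (per_bin k j) * type_weight k j"
    unfolding kb_bin_eq_block(1)[OF assms] f_def[symmetric] sum.reindex[OF inj]
    by (simp add: item_weight_def types)
qed

lemma item_type_ge_of_kb_bin_ge:
  assumes "i < num_items k B" "Suc p \<le> kb_bin k B i" "bins_before B j \<le> p"
  shows "j \<le> item_type k B i"
proof (rule ccontr)
  assume "\<not> j \<le> item_type k B i"
  then have "bins_before B (Suc (item_type k B i)) \<le> bins_before B j"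
    unfolding bins_before_def by (intro prefix_sum_mono) simp
  then show False using kb_bin_bounds(2)[OF assms(1)] assms(2,3) by linarith
qed

lemma kb_bin_le_bins_before_all:
  assumes "i < num_items k B"
  shows "kb_bin k B i \<le> bins_before B (k+1)"
proof -
  have "bins_before B (Suc (item_type k B i)) \<le> bins_before B (k+1)"
    unfolding bins_before_def using item_type_bounds(1)[OF assms] by (intro prefix_sum_mono) simp
  then show ?thesis using kb_bin_bounds(2)[OF assms] by linarith
qed

lemma kb_bin_size_le_1: "(\<Sum>i\<in>bin (num_items k B) (kb_bin k B) (Suc p). item_size k B i) \<le> 1"
proof (cases "p < bins_before B (k+1)")
  case True
  then obtain j where "j < k+1" "bins_before B j \<le> p" "p < bins_before B (Suc j)"
    using prefix_sum_interval_exists[of p B "k+1"] unfolding bins_before_def by blast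
  then have "j \<le> k" "bins_before B j \<le> p" "p < bins_before B (Suc j)" by simp_all
  then show ?thesis using kb_bin_sums(1) per_bin_type_size_le_1 by simp
next
  case False
  have "kb_bin k B i \<noteq> Suc p" if "i < num_items k B" for i
    using kb_bin_le_bins_before_all[OF that] False by linarith
  then have "bin (num_items k B) (kb_bin k B) (Suc p) = {}" by (auto simp: bin_def)
  then show ?thesis by simp
qed

text \<open>The bin \<open>Suc p\<close> of KB lies in the block of some type \<open>j\<close> and holds \<open>per_bin k j\<close> items
  of that type, while all items in later bins have types \<open>\<ge> j\<close>.\<close>
lemma kb_bin_max_weight:
  assumes S: "S \<subseteq> {i. i < num_items k B \<and> Suc p \<le> kb_bin k B i}"
    and size: "(\<Sum>i\<in>S. item_size k B i) \<le> 1"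
  shows "(\<Sum>i\<in>S. item_weight k B i) \<le> (\<Sum>i\<in>bin (num_items k B) (kb_bin k B) (Suc p). item_weight k B i)"
proof (cases "p < bins_before B (k+1)")
  case True
  then obtain j where "j < k+1" "bins_before B j \<le> p" "p < bins_before B (Suc j)"
    using prefix_sum_interval_exists[of p B "k+1"] unfolding bins_before_def by blast
  then have j: "j \<le> k" "bins_before B j \<le> p" "p < bins_before B (Suc j)" by simp_all
  have "finite S" using S by (rule finite_subset) auto
  moreover have "j \<le> item_type k B i \<and> item_type k B i \<le> k" if "i \<in> S" for i
    using S that item_type_ge_of_kb_bin_ge[of i B p j] item_type_bounds(1)[of i k B] j(2) by auto
  ultimately have "(\<Sum>i\<in>S. item_weight k B i) \<le> real (per_bin k j) * type_weight k j"
    using knapsack_weight_le[OF j(1)] size unfolding item_size_def item_weight_def by blast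
  then show ?thesis unfolding kb_bin_sums(2)[OF j] .
next
  case False
  have "\<not> Suc p \<le> kb_bin k B i" if "i < num_items k B" for i
    using kb_bin_le_bins_before_all[OF that] False by linarith
  then have "S = {}" using S by auto
  then show ?thesis by (simp add: item_weight_def sum_nonneg less_imp_le type_weight_pos)
qed

lemma KB_output_kb_bin: "KB_output (num_items k B) (item_size k B) (item_weight k B) (kb_bin k B)"
  unfolding KB_output_def
proof (intro conjI allI impI)
  fix q :: nat assume "1 \<le> q"
  then obtain p where q: "q = Suc p" using Suc_le_D by auto
  show "(\<Sum>i\<in>bin (num_items k B) (kb_bin k B) q. item_size k B i) \<le> 1"
    unfolding q by (rule kb_bin_size_le_1)
  show "(\<Sum>i\<in>S. item_weight k B i) \<le> (\<Sum>i\<in>bin (num_items k B) (kb_bin k B) q. item_weight k B i)"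
    if "S \<subseteq> {i. i < num_items k B \<and> q \<le> kb_bin k B i}" "(\<Sum>i\<in>S. item_size k B i) \<le> 1" for S
    using kb_bin_max_weight that unfolding q .
qed (simp add: kb_bin_def)

end

definition scaled_blocks :: "(nat \<Rightarrow> real) \<Rightarrow> nat \<Rightarrow> nat \<Rightarrow> nat" where
  "scaled_blocks a t j = nat \<lfloor>real t * a j\<rfloor>"

definition kb_limit_cost :: "nat \<Rightarrow> (nat \<Rightarrow> real) \<Rightarrow> real" where
  "kb_limit_cost k a =
    (\<Sum>j<k+1. type_weight k j * real (per_bin k j) * (a j * (\<Sum>l<j. a l) + a j * a j / 2))"

definition rank_limit_cost :: "nat \<Rightarrow> (nat \<Rightarrow> real) \<Rightarrow> real" where
  "rank_limit_cost k a = (\<Sum>j<k+1. type_weight k j * (real (per_bin k j) * a j)^2 / 2)"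

context
  fixes k :: nat and a :: "nat \<Rightarrow> real"
  assumes a_nonneg: "\<And>j. j \<le> k \<Longrightarrow> 0 \<le> a j"
begin

abbreviation (input) "blocks t \<equiv> scaled_blocks a t"

lemma scaled_blocks_tendsto: "j \<le> k \<Longrightarrow> (\<lambda>t. real (blocks t j) / real t) \<longlonglongrightarrow> a j"
  using floor_scaled_tendsto[OF a_nonneg] by (simp add: scaled_blocks_def)

lemma kb_cost_tendsto:
  "(\<lambda>t. cost (num_items k (blocks t)) (item_weight k (blocks t)) (kb_bin k (blocks t)) / (real t)^2)
    \<longlonglongrightarrow> kb_limit_cost k a"
proof -
  define \<beta> where "\<beta> t j = real (blocks t j) / real t" for t j
  have \<beta>: "j < k+1 \<Longrightarrow> (\<lambda>t. \<beta> t j) \<longlonglongrightarrow> a j" for j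
    unfolding \<beta>_def by (rule scaled_blocks_tendsto) simp
  define f where "f t = (\<Sum>j<k+1. type_weight k j * real (per_bin k j) *
    (\<beta> t j * (1 / real t + (\<Sum>l<j. \<beta> t l)) + \<beta> t j * (\<beta> t j - 1 / real t) / 2))" for t
  have "f \<longlonglongrightarrow> (\<Sum>j<k+1. type_weight k j * real (per_bin k j) *
      (a j * (0 + (\<Sum>l<j. a l)) + a j * (a j - 0) / 2))"
    unfolding f_def by (intro tendsto_intros \<beta> lim_inverse_n') auto
  then have lim: "f \<longlonglongrightarrow> kb_limit_cost k a" by (simp add: kb_limit_cost_def)
  show ?thesis
  proof (rule Lim_transform_eventually[OF lim])
    show "\<forall>\<^sub>F t in sequentially. f t =
      cost (num_items k (blocks t)) (item_weight k (blocks t)) (kb_bin k (blocks t)) / (real t)^2"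
      using eventually_ge_at_top[of "1::nat"]
    proof eventually_elim
      case (elim t)
      have "real (bins_before (blocks t) j) / real t = (\<Sum>l<j. \<beta> t l)" for j
        by (simp add: bins_before_def \<beta>_def sum_divide_distrib)
      then show ?case
        unfolding cost_kb_bin f_def sum_divide_distrib
        using elim by (intro sum.cong refl) (simp add: \<beta>_def field_simps power2_eq_square)
    qed
  qed
qed

lemma rank_cost_tendsto:
  "(\<lambda>t. cost (num_items k (blocks t)) (item_weight k (blocks t)) (rank_bin k (blocks t)) / (real t)^2)
    \<longlonglongrightarrow> rank_limit_cost k a"
proof -
  define \<beta> where "\<beta> t j = real (per_bin k j) * (real (blocks t j) / real t)" for t j
  have \<beta>: "j < k+1 \<Longrightarrow> (\<lambda>t. \<beta> t j) \<longlonglongrightarrow> real (per_bin k j) * a j" for j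
    unfolding \<beta>_def by (intro tendsto_mult tendsto_const scaled_blocks_tendsto) simp
  define f where "f t = (\<Sum>j<k+1. type_weight k j *
    (\<beta> t j * (1 / real t) + \<beta> t j * (\<beta> t j - 1 / real t) / 2))" for t
  have "f \<longlonglongrightarrow> (\<Sum>j<k+1. type_weight k j *
      ((real (per_bin k j) * a j) * 0 + (real (per_bin k j) * a j) * (real (per_bin k j) * a j - 0) / 2))"
    unfolding f_def by (intro tendsto_intros \<beta> lim_inverse_n') auto
  then have lim: "f \<longlonglongrightarrow> rank_limit_cost k a" by (simp add: rank_limit_cost_def power2_eq_square)
  show ?thesis
  proof (rule Lim_transform_eventually[OF lim])
    show "\<forall>\<^sub>F t in sequentially. f t =
      cost (num_items k (blocks t)) (item_weight k (blocks t)) (rank_bin k (blocks t)) / (real t)^2"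
      using eventually_ge_at_top[of "1::nat"]
    proof eventually_elim
      case (elim t)
      then show ?case
        unfolding cost_rank_bin f_def sum_divide_distrib
        by (intro sum.cong refl) (simp add: \<beta>_def field_simps power2_eq_square)
    qed
  qed
qed

lemma cost_ratio_tendsto:
  assumes a_pos: "\<And>j. j \<le> k \<Longrightarrow> 0 < a j"
  shows "(\<lambda>t. cost (num_items k (blocks t)) (item_weight k (blocks t)) (kb_bin k (blocks t)) /
      cost (num_items k (blocks t)) (item_weight k (blocks t)) (rank_bin k (blocks t)))
    \<longlonglongrightarrow> kb_limit_cost k a / rank_limit_cost k a"
proof -
  have "0 < type_weight k j * (real (per_bin k j) * a j)^2 / 2" if "j \<le> k" for j
    using a_pos[OF that] per_bin_pos[OF that] type_weight_pos[of k j] by simp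
  then have "0 < rank_limit_cost k a"
    unfolding rank_limit_cost_def by (intro sum_pos) auto
  then have "(\<lambda>t. (cost (num_items k (blocks t)) (item_weight k (blocks t)) (kb_bin k (blocks t)) / (real t)^2) /
      (cost (num_items k (blocks t)) (item_weight k (blocks t)) (rank_bin k (blocks t)) / (real t)^2))
    \<longlonglongrightarrow> kb_limit_cost k a / rank_limit_cost k a"
    by (intro tendsto_divide kb_cost_tendsto rank_cost_tendsto) simp
  then show ?thesis
  proof (rule Lim_transform_eventually)
    show "\<forall>\<^sub>F t in sequentially. (A t / (real t)^2) / (B t / (real t)^2) = A t / B t"
      for A B :: "nat \<Rightarrow> real"
      using eventually_gt_at_top[of "0::nat"] by eventually_elim simp
  qed
qed

end

context
  fixes k :: nat
  assumes k1: "1 \<le> k"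
begin

lemma u_vec_eq: "j \<le> k \<Longrightarrow> u_vec k $ j = type_weight k j / 2"
  by (cases "j = 0") (simp_all add: u_vec_def type_weight_def Suc_diff_le)

lemma v_vec_eq: "j \<le> k \<Longrightarrow> v_vec k $ j = 1 / real (per_bin k j)"
  by (cases "j = 0") (simp_all add: v_vec_def per_bin_def of_nat_per_bin)

text \<open>With \<open>\<rho>\<^sub>j\<close> the weight of a KB bin of type \<open>j\<close> (and \<open>\<rho>\<^sub>k\<^sub>+\<^sub>1 = 0\<close>), \<open>u\<^sub>j = (\<rho>\<^sub>j - \<rho>\<^sub>j\<^sub>+\<^sub>1) / 2\<close>.\<close>
lemma u_vec_eq_bin_weight_diff:
  assumes "j \<le> k"
  shows "u_vec k $ j = (type_weight k j * real (per_bin k j) -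
    (if j < k then type_weight k (Suc j) * real (per_bin k (Suc j)) else 0)) / 2"
proof -
  consider "j = k" | "j = 0" "j < k" | "0 < j" "j < k" using assms by linarith
  then show ?thesis
  proof cases
    case 1
    then show ?thesis using k1 by (simp add: per_bin_type_weight u_vec_def)
  next
    case 2
    then show ?thesis by (simp add: per_bin_type_weight u_vec_def)
  next
    case 3
    define m where "m = k - j"
    have m: "k + 1 - j = Suc m" "k - j = m" "k + 2 - j = Suc (Suc m)" using 3 by (auto simp: m_def)
    have "(1 - 1/2^(Suc m) - (1 - 1/2^m)) / 2 = (1::real) / 2^(Suc (Suc m))" by (simp add: field_simps)
    then show ?thesis using 3 m by (simp add: per_bin_type_weight u_vec_def Suc_diff_le)
  qed
qed

text \<open>Summation by parts turns the \<open>U\<close>-weighted squares of the partial sums of the \<open>a\<^sub>j\<close> into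
  the KB limit cost.\<close>
lemma R_val_eq_limit_costs:
  assumes x: "x \<in> carrier_vec (k+1)"
  defines "a \<equiv> \<lambda>j. (\<Sum>l\<le>j. x $ l) / real (per_bin k j)"
  shows "R_val k x = kb_limit_cost k a / rank_limit_cost k a"
proof -
  define S where "S n = (\<Sum>l<n. a l)" for n
  define \<rho> where "\<rho> j = (if j \<le> k then type_weight k j * real (per_bin k j) else 0)" for j
  have per_bin_a: "real (per_bin k j) * a j = (\<Sum>l\<le>j. x $ l)" if "j \<le> k" for j
    using per_bin_pos[OF that] by (simp add: a_def)
  have den: "(\<Sum>i<k+1. u_vec k $ i * (\<Sum>j\<le>i. x $ j)^2) = rank_limit_cost k a"
    unfolding rank_limit_cost_def by (rule sum.cong) (auto simp: per_bin_a u_vec_eq)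
  have inner: "(\<Sum>j\<le>i. v_vec k $ j * (\<Sum>l\<le>j. x $ l)) = S (Suc i)" if "i \<le> k" for i
    unfolding S_def lessThan_Suc_atMost using that by (intro sum.cong) (auto simp: v_vec_eq a_def)
  have "(\<Sum>i<k+1. u_vec k $ i * (\<Sum>j\<le>i. v_vec k $ j * (\<Sum>l\<le>j. x $ l))^2) =
      (\<Sum>i<k+1. (\<rho> i - \<rho> (Suc i)) * (S (Suc i))^2) / 2"
    unfolding sum_divide_distrib
    by (rule sum.cong) (auto simp: inner u_vec_eq_bin_weight_diff \<rho>_def)
  also have "(\<Sum>i<k+1. (\<rho> i - \<rho> (Suc i)) * (S (Suc i))^2) = (\<Sum>j<k+1. \<rho> j * ((S (Suc j))^2 - (S j)^2))"
    using summation_by_parts_lessThan[of \<rho> "\<lambda>n. (S n)^2" "k+1"] by (simp add: \<rho>_def S_def)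
  also have "\<dots> = (\<Sum>j<k+1. 2 * (type_weight k j * real (per_bin k j) *
      (a j * (\<Sum>l<j. a l) + a j * a j / 2)))"
    by (rule sum.cong) (auto simp: \<rho>_def S_def power2_eq_square algebra_simps)
  finally show ?thesis
    unfolding R_val_eq_sums[OF x] den kb_limit_cost_def by (simp add: sum_distrib_left[symmetric])
qed

end

theorem lemma1:
  fixes k :: nat and x :: "real vec"
  assumes "1 \<le> k"
    and "x \<in> carrier_vec (k+1)"
    and "\<forall>i<k+1. 0 < x $ i"
  shows "ereal (R_val k x) \<le> KB_ratio"
proof -
  define a where "a j = (\<Sum>l\<le>j. x $ l) / real (per_bin k j)" for j
  have a_pos: "0 < a j" if "j \<le> k" for j
    unfolding a_def using assms(3) that per_bin_pos[OF that] by (intro divide_pos_pos sum_pos) auto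
  let ?B = "scaled_blocks a"
  have "(\<lambda>t. cost (num_items k (?B t)) (item_weight k (?B t)) (kb_bin k (?B t)) /
      cost (num_items k (?B t)) (item_weight k (?B t)) (rank_bin k (?B t))) \<longlonglongrightarrow> R_val k x"
    using cost_ratio_tendsto[OF less_imp_le[OF a_pos] a_pos]
    unfolding R_val_eq_limit_costs[OF assms(1,2)] a_def .
  then show ?thesis
    using valid_instance[OF assms(1)] KB_output_kb_bin[OF assms(1)] feasible_rank_bin[OF assms(1)]
    by (rule KB_ratio_ge_limit[rotated 3])
qed

end
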